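(* Let $g$ be the contravariant metric associated with an admissible data set and, for each vertex $\alpha$, let $K^\alpha(t_\alpha)$ be the family of Killing tensors defined by $K^\alpha(t_\alpha)(\xi,\eta)=g(S^\alpha(t_\alpha)\xi,\eta)$ with $S^\alpha(t_\alpha)$ as below; it is a polynomial of degree $n_\alpha-1$ in $t_\alpha$. For $j=1,\dots,n_\alpha$ let $I^\alpha_j$ be the quadratic function on $T^*M$ given by $p\mapsto (K^\alpha_j)^{ab}p_ap_b$, where $K^\alpha_j$ is the coefficient of $t_\alpha^{\,n_\alpha-j}$ in $K^\alpha(t_\alpha)$ and indices are raised with $g$. Order the $n$ integrals as $I=(I^1_1,\dots,I^1_{n_1},I^2_1,\dots,I^2_{n_2},\dots,I^B_{n_B})^\top$ and the momenta as $P=(p_{x_1^1}^2,\dots,p_{x_1^{n_1}}^2,\dots,p_{x_B^{n_B}}^2)^\top$. Let $S$ be the $n\times n$ matrix whose rows are indexed by the coordinates $x_\beta^i$ and whose columns are indexed by the integrals $I^\alpha_j$, with entries - $S_{(\alpha,i),(\alpha,j)}=\dfrac{(x_\alpha^i)^{n_\alpha-j}}{P_\alpha(x_\alpha^i)}$; - if $\beta=\operatorname{next}(\alpha)$: $S_{(\beta,i),(\alpha,1)}=\dfrac{1}{P_\beta(x_\beta^i)\,(x_\beta^i-\lambda_\alpha)}$ and $S_{(\beta,i),(\alpha,j)}=0$ for $j\ge2$; - $S_{(\beta,i),(\alpha,j)}=0$ whenever $\beta\ne\alpha$ and $\beta\neq\operatorname{next}(\alpha)$. Then $S\,I=P$ (so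 $S$ is a Stäckel matrix: its row indexed by $x_\beta^i$ depends only on $x_\beta^i$). Here $S^\alpha(t_\alpha)$ is block-diagonal w.r.t. $(X_1,\dots,X_B)$ with $\alpha$-block $f_\alpha^{-1}(t_\alpha\operatorname{Id}-L_\alpha)^{-1}\det(t_\alpha\operatorname{Id}-L_\alpha)$, with $\beta$-block $\Phi^{\alpha\beta}(t_\alpha)\operatorname{Id}_{n_\beta}$ for $\alpha\prec\beta$, where $\Phi^{\alpha\beta}(t_\alpha)=\frac{1}{f_\alpha(t_\alpha-\lambda_\gamma)}\bigl(\det(t_\alpha\operatorname{Id}-L_\alpha)-\det(\lambda_\gamma\operatorname{Id}-L_\alpha)\bigr)$ with $\gamma$ the vertex preceding $\alpha$ on the oriented path from $\beta$ to $\alpha$, and all other blocks zero.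
   Context: Admissible data. Fix $n\ge1$. An admissible data set consists of: a natural number $B\le n$; natural numbers $n_1,\dots,n_B$ with $n_1+\dots+n_B=n$; an in-directed rooted forest $\mathsf F$ with vertex set $\{1,\dots,B\}$, i.e. a directed graph each of whose connected components is a rooted tree with all edges oriented towards its root (so every vertex has a unique oriented path to a root); for an edge from $\beta$ to $\alpha$ we write $\alpha=\operatorname{next}(\beta)$, and for $\alpha\neq\beta$ we write $\alpha\prec\beta$ if there is an oriented path from $\beta$ to $\alpha$; every non-root vertex $\beta$ (equivalently, every edge $\beta\to\operatorname{next}(\beta)$) carries a number $\lambda_\beta$; every vertex $\alpha$ carries a polynomial $P_\alpha(t)=a^\alpha_0+a^\alpha_1t+\dots+a^\alpha_{n_\alpha+1}t^{n_\alpha+1}$ of degree at most $n_\alpha+1$. These are required to satisfy: (i) if $\mathsf F$ has more than one connected component, then $a^\alpha_{n_\alpha+1}=0$ for every root $\alpha$; (ii) if $\alpha=\operatorname{next}(\beta)$, then $P_\alpha(\lambda_\beta)=0$ and $a^\beta_{n_\beta+1}=P_\alpha'(\lambda_\beta)$; (iii) if $\beta\neq\gamma$ satisfy $\operatorname{next}(\beta)=\operatorname{next}(\gamma)=\alpha$ and $\lambda_\beta=\lambda_\gamma=\lambda$, then $\lambda$ is a root of $P_\alpha$ of multiplicity at least $2$. Associated metric. Divide the coordinates $(x^1,\dots,x^n)$ into consecutive blocks $X_\alpha=(x_\alpha^1,\dots,x_\alpha^{n_\alpha})$, $\alpha=1,\dots,B$. Let $L_\alpha=\operatorname{diag}(x_\alpha^1,\dots,x_\alpha^{n_\alpha})$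 (an $n_\alpha\times n_\alpha$ operator), let $g^{\mathsf{LC}}_\alpha=\sum_{s=1}^{n_\alpha}\bigl(\prod_{j\neq s}(x_\alpha^s-x_\alpha^j)\bigr)^{-1}\bigl(\partial/\partial x_\alpha^s\bigr)^2$ (a contravariant metric on the block), and let $f_\alpha=\prod_{s}\det\bigl(\lambda_s\operatorname{Id}-L_{\operatorname{next}(s)}\bigr)^{-1}$, the product over all non-root vertices $s$ with $s\prec\alpha$ or $s=\alpha$ (so $f_\alpha=1$ if $\alpha$ is a root). The associated contravariant metric is the diagonal metric $g=\operatorname{diag}(g_1,\dots,g_B)$ with $g_\alpha=f_\alpha\,P_\alpha(L_\alpha)\,g^{\mathsf{LC}}_\alpha$, i.e. $g^{ii}$ for the coordinate $x_\alpha^s$ equals $f_\alpha P_\alpha(x_\alpha^s)/\prod_{j\ne s}(x_\alpha^s-x_\alpha^j)$. It is considered on an open set where all these quantities are defined and nonzero. Coordinates are allowed to be real or to come in complex-conjugate pairs. *)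

theory Defs
  imports Complex_Main "HOL-Computational_Algebra.Polynomial"
begin

text \<open>The forest is given by a partial map
  nxt: nxt b = Some a means there is an edge b -> a (a = next(b)); nxt b = None
  means b is a root.  Coordinates of block a are x a 1, ..., x a (nb a),
  momenta p a s is the momentum conjugate to x a s.  Everything is complex
  (covering real coordinates and complex-conjugate pairs).\<close>

definition fedges :: "nat \<Rightarrow> (nat \<Rightarrow> nat option) \<Rightarrow> (nat \<times> nat) set" where
  "fedges B nxt = {(b, a). b \<in> {1..B} \<and> nxt b = Some a}"

text \<open>prec B nxt a b  means  a \<prec> b: there is an oriented path from b to a.\<close>
definition prec :: "nat \<Rightarrow> (nat \<Rightarrow> nat option) \<Rightarrow> nat \<Rightarrow> nat \<Rightarrow> bool" where
  "prec B nxt a b \<longleftrightarrow> (b, a) \<in> (fedges B nxt)\<^sup>+"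

text \<open>In-directed rooted forest on {1..B}: edges stay inside the vertex set and
  there are no cycles (so every vertex has a unique oriented path to a root).\<close>
definition in_forest :: "nat \<Rightarrow> (nat \<Rightarrow> nat option) \<Rightarrow> bool" where
  "in_forest B nxt \<longleftrightarrow>
     (\<forall>b\<in>{1..B}. \<forall>a. nxt b = Some a \<longrightarrow> a \<in> {1..B}) \<and> acyclic (fedges B nxt)"

definition roots :: "nat \<Rightarrow> (nat \<Rightarrow> nat option) \<Rightarrow> nat set" where
  "roots B nxt = {a \<in> {1..B}. nxt a = None}"

definition admissible ::
  "nat \<Rightarrow> nat \<Rightarrow> (nat \<Rightarrow> nat) \<Rightarrow> (nat \<Rightarrow> nat option) \<Rightarrow> (nat \<Rightarrow> complex)
    \<Rightarrow> (nat \<Rightarrow> complex poly) \<Rightarrow> bool" where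
  "admissible n B nb nxt lam P \<longleftrightarrow>
     1 \<le> n \<and> 1 \<le> B \<and> B \<le> n \<and> (\<forall>a\<in>{1..B}. 1 \<le> nb a) \<and> (\<Sum>a\<in>{1..B}. nb a) = n \<and>
     in_forest B nxt \<and>
     (\<forall>a\<in>{1..B}. degree (P a) \<le> nb a + 1) \<and>
     \<comment> \<open>(i): more than one connected component, i.e. more than one root\<close>
     (card (roots B nxt) > 1 \<longrightarrow> (\<forall>a\<in>roots B nxt. coeff (P a) (nb a + 1) = 0)) \<and>
     \<comment> \<open>(ii)\<close>
     (\<forall>b\<in>{1..B}. \<forall>a. nxt b = Some a \<longrightarrow>
         poly (P a) (lam b) = 0 \<and> coeff (P b) (nb b + 1) = poly (pderiv (P a)) (lam b)) \<and>
     \<comment> \<open>(iii)\<close>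
     (\<forall>b\<in>{1..B}. \<forall>c\<in>{1..B}. \<forall>a. b \<noteq> c \<and> nxt b = Some a \<and> nxt c = Some a \<and> lam b = lam c
         \<longrightarrow> [:- lam b, 1:] ^ 2 dvd P a)"

text \<open>det(t Id - L_a) evaluated, and as a polynomial in t.\<close>
definition detL :: "(nat \<Rightarrow> nat) \<Rightarrow> (nat \<Rightarrow> nat \<Rightarrow> complex) \<Rightarrow> nat \<Rightarrow> complex \<Rightarrow> complex" where
  "detL nb x a t = (\<Prod>j\<in>{1..nb a}. t - x a j)"

definition charL :: "(nat \<Rightarrow> nat) \<Rightarrow> (nat \<Rightarrow> nat \<Rightarrow> complex) \<Rightarrow> nat \<Rightarrow> complex poly" where
  "charL nb x a = (\<Prod>j\<in>{1..nb a}. [:- x a j, 1:])"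

definition fvert :: "nat \<Rightarrow> (nat \<Rightarrow> nat) \<Rightarrow> (nat \<Rightarrow> nat option) \<Rightarrow> (nat \<Rightarrow> complex)
    \<Rightarrow> (nat \<Rightarrow> nat \<Rightarrow> complex) \<Rightarrow> nat \<Rightarrow> complex" where
  "fvert B nb nxt lam x a =
     (\<Prod>s\<in>{s\<in>{1..B}. nxt s \<noteq> None \<and> (prec B nxt s a \<or> s = a)}.
        inverse (detL nb x (the (nxt s)) (lam s)))"

text \<open>Diagonal entry g^{ii} of the contravariant metric at coordinate x a s.\<close>
definition gdiag :: "nat \<Rightarrow> (nat \<Rightarrow> nat) \<Rightarrow> (nat \<Rightarrow> nat option) \<Rightarrow> (nat \<Rightarrow> complex)
    \<Rightarrow> (nat \<Rightarrow> complex poly) \<Rightarrow> (nat \<Rightarrow> nat \<Rightarrow> complex) \<Rightarrow> nat \<Rightarrow> nat \<Rightarrow> complex" where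
  "gdiag B nb nxt lam P x a s =
     fvert B nb nxt lam x a * poly (P a) (x a s) / (\<Prod>j\<in>{1..nb a} - {s}. x a s - x a j)"

definition pred_on_path :: "nat \<Rightarrow> (nat \<Rightarrow> nat option) \<Rightarrow> nat \<Rightarrow> nat \<Rightarrow> nat" where
  "pred_on_path B nxt a b = (THE c. c \<in> {1..B} \<and> nxt c = Some a \<and> (c = b \<or> prec B nxt c b))"

text \<open>Phi^{ab}(t) = (det(t Id - L_a) - det(lam_c Id - L_a)) / (f_a (t - lam_c)), as a polynomial
  (the division is exact).\<close>
definition Phi :: "nat \<Rightarrow> (nat \<Rightarrow> nat) \<Rightarrow> (nat \<Rightarrow> nat option) \<Rightarrow> (nat \<Rightarrow> complex)
    \<Rightarrow> (nat \<Rightarrow> nat \<Rightarrow> complex) \<Rightarrow> nat \<Rightarrow> nat \<Rightarrow> complex poly" where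
  "Phi B nb nxt lam x a b =
     (let c = pred_on_path B nxt a b in
      smult (inverse (fvert B nb nxt lam x a))
        ((charL nb x a - [:detL nb x a (lam c):]) div [:- lam c, 1:]))"

text \<open>Diagonal entry of S^a(t) (as a polynomial in t) at coordinate x b i.\<close>
definition Sdiag :: "nat \<Rightarrow> (nat \<Rightarrow> nat) \<Rightarrow> (nat \<Rightarrow> nat option) \<Rightarrow> (nat \<Rightarrow> complex)
    \<Rightarrow> (nat \<Rightarrow> nat \<Rightarrow> complex) \<Rightarrow> nat \<Rightarrow> nat \<Rightarrow> nat \<Rightarrow> complex poly" where
  "Sdiag B nb nxt lam x a b i =
     (if b = a then smult (inverse (fvert B nb nxt lam x a)) (\<Prod>j\<in>{1..nb a} - {i}. [:- x a j, 1:])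
      else if prec B nxt a b then Phi B nb nxt lam x a b
      else 0)"

definition Kdiag :: "nat \<Rightarrow> (nat \<Rightarrow> nat) \<Rightarrow> (nat \<Rightarrow> nat option) \<Rightarrow> (nat \<Rightarrow> complex)
    \<Rightarrow> (nat \<Rightarrow> complex poly) \<Rightarrow> (nat \<Rightarrow> nat \<Rightarrow> complex) \<Rightarrow> nat \<Rightarrow> nat \<Rightarrow> nat \<Rightarrow> complex poly" where
  "Kdiag B nb nxt lam P x a b i = smult (gdiag B nb nxt lam P x b i) (Sdiag B nb nxt lam x a b i)"

definition integral :: "nat \<Rightarrow> (nat \<Rightarrow> nat) \<Rightarrow> (nat \<Rightarrow> nat option) \<Rightarrow> (nat \<Rightarrow> complex)
    \<Rightarrow> (nat \<Rightarrow> complex poly) \<Rightarrow> (nat \<Rightarrow> nat \<Rightarrow> complex) \<Rightarrow> (nat \<Rightarrow> nat \<Rightarrow> complex)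
    \<Rightarrow> nat \<Rightarrow> nat \<Rightarrow> complex" where
  "integral B nb nxt lam P x p a j =
     (\<Sum>b\<in>{1..B}. \<Sum>i\<in>{1..nb b}. coeff (Kdiag B nb nxt lam P x a b i) (nb a - j) * (p b i)\<^sup>2)"

text \<open>Entry of the matrix S in row x_b^i and column I^a_j.\<close>
definition stackel :: "(nat \<Rightarrow> nat) \<Rightarrow> (nat \<Rightarrow> nat option) \<Rightarrow> (nat \<Rightarrow> complex)
    \<Rightarrow> (nat \<Rightarrow> complex poly) \<Rightarrow> (nat \<Rightarrow> nat \<Rightarrow> complex) \<Rightarrow> nat \<Rightarrow> nat \<Rightarrow> nat \<Rightarrow> nat \<Rightarrow> complex" where
  "stackel nb nxt lam P x b i a j =
     (if b = a then x a i ^ (nb a - j) / poly (P a) (x a i)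
      else if nxt a = Some b then
        (if j = 1 then 1 / (poly (P b) (x b i) * (x b i - lam a)) else 0)
      else 0)"

definition nondegenerate :: "nat \<Rightarrow> (nat \<Rightarrow> nat) \<Rightarrow> (nat \<Rightarrow> nat option) \<Rightarrow> (nat \<Rightarrow> complex)
    \<Rightarrow> (nat \<Rightarrow> complex poly) \<Rightarrow> (nat \<Rightarrow> nat \<Rightarrow> complex) \<Rightarrow> bool" where
  "nondegenerate B nb nxt lam P x \<longleftrightarrow>
     (\<forall>a\<in>{1..B}. \<forall>s\<in>{1..nb a}. \<forall>j\<in>{1..nb a}. s \<noteq> j \<longrightarrow> x a s \<noteq> x a j) \<and>
     (\<forall>a\<in>{1..B}. \<forall>s\<in>{1..nb a}. poly (P a) (x a s) \<noteq> 0) \<and>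
     (\<forall>s\<in>{1..B}. \<forall>a. nxt s = Some a \<longrightarrow> (\<forall>j\<in>{1..nb a}. lam s \<noteq> x a j))"

end

theory Submission
  imports Defs
begin

text \<open>Expanding the integrals, S I = P says that the row of S at x_b^i, applied to the coefficients
  of the polynomials K^a(t) at the momentum p_{x_c^k}^2, is the Kronecker delta.  Since the row
  entries of the diagonal block are the powers of x_b^i, that block contributes the value at x_b^i
  of the degree < n_b polynomial K^b(t); each child of b contributes a multiple of the leading
  coefficient of its K^a(t).  For c = b the value is the Lagrange product \<Prod>_{j\<noteq>k}(x_b^i - x_b^j)
  times g f^{-1}, which is P_b(x_b^i) for k = i and 0 otherwise.  For b \<prec> c the block of b is
  the difference quotient of det(t Id - L_b) at lam_d, evaluated at its root x_b^i, where d is the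
  child of b on the path from c to b; it is cancelled by the contribution of d, because f_d is f_b
  divided by det(lam_d Id - L_b).  All other contributions vanish.  Only the forest structure and
  the nondegeneracy of the point enter: the algebraic conditions (i)-(iii) on the P_a are needed
  for the Killing property, not for this identity.\<close>

lemma sum_sum_mult_sum_sum_commute:
  fixes s :: "'a \<Rightarrow> 'b \<Rightarrow> 'r::comm_semiring_0"
  shows "(\<Sum>a\<in>A. \<Sum>j\<in>J a. s a j * (\<Sum>c\<in>C. \<Sum>k\<in>K c. f a j c k * q c k))
       = (\<Sum>c\<in>C. \<Sum>k\<in>K c. (\<Sum>a\<in>A. \<Sum>j\<in>J a. s a j * f a j c k) * q c k)"
proof -
  have "(\<Sum>a\<in>A. \<Sum>j\<in>J a. s a j * (\<Sum>c\<in>C. \<Sum>k\<in>K c. f a j c k * q c k))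
      = (\<Sum>a\<in>A. \<Sum>j\<in>J a. \<Sum>c\<in>C. \<Sum>k\<in>K c. s a j * f a j c k * q c k)"
    by (simp add: sum_distrib_left mult.assoc)
  also have "\<dots> = (\<Sum>c\<in>C. \<Sum>k\<in>K c. \<Sum>a\<in>A. \<Sum>j\<in>J a. s a j * f a j c k * q c k)"
    by (subst sum.swap, subst (2) sum.swap, simp only: sum.swap[of _ "J _"])
  also have "\<dots> = (\<Sum>c\<in>C. \<Sum>k\<in>K c. (\<Sum>a\<in>A. \<Sum>j\<in>J a. s a j * f a j c k) * q c k)"
    by (simp add: sum_distrib_right)
  finally show ?thesis .
qed

lemma degree_prod_monic_linear:
  fixes y :: "'b \<Rightarrow> 'a::idom"
  assumes "finite A"
  shows "degree (\<Prod>j\<in>A. [:- y j, 1:]) = card A"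
  using assms by (subst degree_prod_eq_sum_degree) auto

lemma coeff_prod_monic_linear_card:
  fixes y :: "'b \<Rightarrow> 'a::idom"
  assumes "finite A"
  shows "coeff (\<Prod>j\<in>A. [:- y j, 1:]) (card A) = 1"
  using lead_coeff_prod[of "\<lambda>j. [:- y j, 1:]" A] by (simp add: degree_prod_monic_linear[OF assms])

lemma coeff_synthetic_div_top:
  fixes p :: "'a::idom poly"
  assumes "degree p \<ge> 1"
  shows "coeff (synthetic_div p c) (degree p - 1) = lead_coeff p"
proof -
  let ?q = "synthetic_div p c"
  have dq: "degree ?q = degree p - 1" by (simp add: degree_synthetic_div)
  have "lead_coeff p = coeff ([:-c, 1:] * ?q + [:poly p c:]) (degree p)"
    by (simp only: synthetic_div_correct')
  also have "\<dots> = coeff ([:-c, 1:] * ?q) (degree [:-c, 1:] + degree ?q)"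
    using assms dq by (simp add: coeff_pCons split: nat.splits)
  also have "\<dots> = coeff ?q (degree ?q)" by (subst coeff_mult_degree_sum) simp
  finally show ?thesis using dq by simp
qed

lemma synthetic_div_eq_div:
  fixes p :: "'a::field poly"
  shows "synthetic_div p c = (p - [:poly p c:]) div [:- c, 1:]"
proof -
  have "p - [:poly p c:] = [:-c, 1:] * synthetic_div p c"
    using synthetic_div_correct'[of c p] by (simp add: algebra_simps)
  then have "(p - [:poly p c:]) div [:- c, 1:] = synthetic_div p c"
    by (simp only:) (rule nonzero_mult_div_cancel_left, simp)
  then show ?thesis ..
qed

lemma poly_synthetic_div:
  fixes p :: "'a::field poly"
  assumes "t \<noteq> c"
  shows "poly (synthetic_div p c) t = (poly p t - poly p c) / (t - c)"
proof -
  have "poly p t = (t - c) * poly (synthetic_div p c) t + poly p c"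
    using arg_cong[OF synthetic_div_correct'[of c p], of "\<lambda>q. poly q t"] by (simp add: algebra_simps)
  with assms show ?thesis by (simp add: field_simps)
qed

lemma sum_reversed_coeffs_eq_poly:
  fixes q :: "'a::comm_semiring_1 poly"
  assumes "degree q < m"
  shows "(\<Sum>j\<in>{1..m}. y ^ (m - j) * coeff q (m - j)) = poly q y"
proof -
  have "(\<Sum>j\<in>{1..m}. y ^ (m - j) * coeff q (m - j)) = (\<Sum>i<m. y ^ i * coeff q i)"
    by (rule sum.reindex_bij_witness[of _ "\<lambda>i. m - i" "\<lambda>j. m - j"]) auto
  also have "\<dots> = (\<Sum>i\<le>degree q. coeff q i * y ^ i)"
    by (rule sum.mono_neutral_cong_right) (use assms in \<open>auto simp: coeff_eq_0 mult.commute\<close>)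
  finally show ?thesis by (simp add: poly_altdef)
qed

locale rooted_forest =
  fixes B :: nat and nxt :: "nat \<Rightarrow> nat option"
  assumes forest: "in_forest B nxt"
begin

lemma fedges_iff: "(u, v) \<in> fedges B nxt \<longleftrightarrow> u \<in> {1..B} \<and> nxt u = Some v"
  by (simp add: fedges_def)

lemma prec_irrefl: "\<not> prec B nxt a a"
  using forest by (simp add: in_forest_def prec_def acyclic_def)

lemma prec_trans: "prec B nxt a b \<Longrightarrow> prec B nxt b c \<Longrightarrow> prec B nxt a c"
  unfolding prec_def by (rule trancl_trans)

lemma prec_edge: "g \<in> {1..B} \<Longrightarrow> nxt g = Some b \<Longrightarrow> prec B nxt b g"
  by (simp add: prec_def fedges_iff r_into_trancl')

lemma prec_child_iff:
  assumes "g \<in> {1..B}" "nxt g = Some b"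
  shows "prec B nxt s g \<longleftrightarrow> s = b \<or> prec B nxt s b"
proof
  assume "prec B nxt s g"
  then have "(g, s) \<in> (fedges B nxt)\<^sup>+" by (simp add: prec_def)
  then show "s = b \<or> prec B nxt s b"
    by (rule converse_tranclE) (use assms in \<open>auto simp: fedges_iff prec_def\<close>)
next
  assume "s = b \<or> prec B nxt s b"
  then show "prec B nxt s g" using prec_edge[OF assms] prec_trans by blast
qed

lemma edge_not_below: "g \<in> {1..B} \<Longrightarrow> nxt g = Some b \<Longrightarrow> \<not> (g = b \<or> prec B nxt g b)"
  using prec_edge prec_trans prec_irrefl by blast

lemma prec_child_trans:
  "g \<in> {1..B} \<Longrightarrow> nxt g = Some b \<Longrightarrow> g = c \<or> prec B nxt g c \<Longrightarrow> prec B nxt b c"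
  using prec_edge prec_trans by blast

lemma child_on_path_exists:
  assumes "prec B nxt b c"
  obtains g where "g \<in> {1..B}" "nxt g = Some b" "g = c \<or> prec B nxt g c"
proof -
  have "(c, b) \<in> (fedges B nxt)\<^sup>+" using assms by (simp add: prec_def)
  then show ?thesis
    by (cases rule: tranclE) (auto simp: fedges_iff prec_def intro: that)
qed

text \<open>Since every vertex has at most one outgoing edge, the paths leaving c are linearly
  ordered; two distinct children of b on them would put b on a cycle.\<close>
lemma child_on_path_unique:
  assumes "g \<in> {1..B}" "nxt g = Some b" "g = c \<or> prec B nxt g c"
    and "g' \<in> {1..B}" "nxt g' = Some b" "g' = c \<or> prec B nxt g' c"
  shows "g = g'"
proof (rule ccontr)
  assume "g \<noteq> g'"
  have sv: "single_valued (fedges B nxt)"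
    by (auto simp: single_valued_def fedges_def)
  have "(c, g) \<in> (fedges B nxt)\<^sup>*" "(c, g') \<in> (fedges B nxt)\<^sup>*"
    using assms(3,6) by (auto simp: prec_def)
  from single_valued_confluent[OF sv this]
  have "prec B nxt g' g \<or> prec B nxt g g'"
    using \<open>g \<noteq> g'\<close> by (auto simp: prec_def dest: rtranclD)
  then show False
    using prec_child_iff[OF assms(1,2), of g'] prec_child_iff[OF assms(4,5), of g]
      edge_not_below[OF assms(1,2)] edge_not_below[OF assms(4,5)] by blast
qed

lemma pred_on_path_child:
  assumes "prec B nxt b c"
  shows "pred_on_path B nxt b c \<in> {1..B}" "nxt (pred_on_path B nxt b c) = Some b"
    "pred_on_path B nxt b c = c \<or> prec B nxt (pred_on_path B nxt b c) c"
proof -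
  obtain g where g: "g \<in> {1..B}" "nxt g = Some b" "g = c \<or> prec B nxt g c"
    using child_on_path_exists[OF assms] .
  have "pred_on_path B nxt b c = g"
    unfolding pred_on_path_def
  proof (rule the_equality)
    fix g' assume "g' \<in> {1..B} \<and> nxt g' = Some b \<and> (g' = c \<or> prec B nxt g' c)"
    then show "g' = g" using child_on_path_unique[OF g] by auto
  qed (use g in auto)
  with g show "pred_on_path B nxt b c \<in> {1..B}" "nxt (pred_on_path B nxt b c) = Some b"
    "pred_on_path B nxt b c = c \<or> prec B nxt (pred_on_path B nxt b c) c" by simp_all
qed

lemma children_on_path:
  "{g \<in> {1..B}. nxt g = Some b \<and> (g = c \<or> prec B nxt g c)}
     = (if prec B nxt b c then {pred_on_path B nxt b c} else {})"
proof (cases "prec B nxt b c")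
  case True
  note g = pred_on_path_child[OF True]
  show ?thesis
  proof (rule set_eqI)
    fix a
    show "a \<in> {g \<in> {1..B}. nxt g = Some b \<and> (g = c \<or> prec B nxt g c)}
      \<longleftrightarrow> a \<in> (if prec B nxt b c then {pred_on_path B nxt b c} else {})"
      using True g child_on_path_unique[OF g, of a] by auto
  qed
next
  case False
  then show ?thesis using prec_child_trans[of _ b c] by auto
qed

end

lemma poly_charL: "poly (charL nb x a) t = detL nb x a t"
  by (simp add: charL_def detL_def poly_prod)

lemma degree_charL: "degree (charL nb x a) = nb a"
  using degree_prod_monic_linear[of "{1..nb a}" "x a"] by (simp add: charL_def)

lemma coeff_charL_top: "coeff (charL nb x a) (nb a) = 1"
  using coeff_prod_monic_linear_card[of "{1..nb a}" "x a"] by (simp add: charL_def)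

lemma Phi_eq_synthetic_div:
  "Phi B nb nxt lam x a c
     = smult (inverse (fvert B nb nxt lam x a)) (synthetic_div (charL nb x a) (lam (pred_on_path B nxt a c)))"
  by (simp add: Phi_def Let_def synthetic_div_eq_div poly_charL)

locale stackel_data = rooted_forest +
  fixes nb :: "nat \<Rightarrow> nat" and lam :: "nat \<Rightarrow> complex" and P :: "nat \<Rightarrow> complex poly"
    and x :: "nat \<Rightarrow> nat \<Rightarrow> complex"
  assumes nondeg: "nondegenerate B nb nxt lam P x"
    and nb_pos: "\<forall>a\<in>{1..B}. 1 \<le> nb a"
begin

abbreviation "f \<equiv> fvert B nb nxt lam x"
abbreviation "g \<equiv> gdiag B nb nxt lam P x"
abbreviation "K \<equiv> Kdiag B nb nxt lam P x"
abbreviation "S \<equiv> stackel nb nxt lam P x"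

lemma x_ne_lam_edge:
  assumes "d \<in> {1..B}" "nxt d = Some b" "i \<in> {1..nb b}"
  shows "x b i \<noteq> lam d"
proof -
  have "\<forall>j\<in>{1..nb b}. lam d \<noteq> x b j"
    using nondeg assms(1,2) unfolding nondegenerate_def by blast
  with assms(3) show ?thesis by metis
qed

lemma detL_edge_nonzero: "d \<in> {1..B} \<Longrightarrow> nxt d = Some b \<Longrightarrow> detL nb x b (lam d) \<noteq> 0"
  using nondeg by (auto simp: nondegenerate_def detL_def)

lemma fvert_nonzero: "f a \<noteq> 0"
  unfolding fvert_def using detL_edge_nonzero by (auto simp: prod_zero_iff)

lemma fvert_edge:
  assumes "d \<in> {1..B}" "nxt d = Some b"
  shows "f d = inverse (detL nb x b (lam d)) * f b"
proof -
  let ?below = "\<lambda>a. {s\<in>{1..B}. nxt s \<noteq> None \<and> (prec B nxt s a \<or> s = a)}"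
  have "?below d = insert d (?below b)"
    using assms prec_child_iff[OF assms] by auto
  moreover have "d \<notin> ?below b" using edge_not_below[OF assms] by auto
  ultimately show ?thesis using assms by (simp add: fvert_def)
qed

lemma coeff_Kdiag_top:
  assumes "a \<in> {1..B}" "c \<in> {1..B}" "k \<in> {1..nb c}"
  shows "coeff (K a c k) (nb a - 1) = (if c = a \<or> prec B nxt a c then g c k * inverse (f a) else 0)"
proof -
  consider "c = a" | "c \<noteq> a" "prec B nxt a c" | "c \<noteq> a" "\<not> prec B nxt a c" by blast
  then show ?thesis
  proof cases
    case 1
    have "card ({1..nb a} - {k}) = nb a - 1" using assms 1 by simp
    with coeff_prod_monic_linear_card[of "{1..nb a} - {k}" "x a"]
    show ?thesis using 1 by (simp add: Kdiag_def Sdiag_def)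
  next
    case 2
    have "coeff (synthetic_div (charL nb x a) l) (nb a - 1) = 1" for l
      using coeff_synthetic_div_top[of "charL nb x a" l] nb_pos assms(1)
      by (simp add: degree_charL coeff_charL_top)
    with 2 show ?thesis by (simp add: Kdiag_def Sdiag_def Phi_eq_synthetic_div)
  next
    case 3
    then show ?thesis by (simp add: Kdiag_def Sdiag_def)
  qed
qed

lemma degree_Kdiag:
  assumes "b \<in> {1..B}" "k \<in> {1..nb c}"
  shows "degree (K b c k) < nb b"
proof -
  have "1 \<le> nb b" using nb_pos assms(1) by simp
  moreover have "degree (\<Prod>j\<in>{1..nb b}-{k}. [:-x b j, 1:]) < nb b" if "c = b"
    using degree_prod_monic_linear[of "{1..nb b} - {k}" "x b"] assms that \<open>1 \<le> nb b\<close> by simp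
  ultimately have "degree (Sdiag B nb nxt lam x b c k) < nb b"
    by (auto simp: Sdiag_def Phi_eq_synthetic_div degree_synthetic_div degree_charL)
  then show ?thesis unfolding Kdiag_def using degree_smult_le le_less_trans by blast
qed

lemma poly_Kdiag_self:
  "poly (K b b k) (x b i) = g b k * inverse (f b) * (\<Prod>j\<in>{1..nb b}-{k}. x b i - x b j)"
  by (simp add: Kdiag_def Sdiag_def poly_prod)

lemma poly_Kdiag_below:
  assumes "i \<in> {1..nb b}" "prec B nxt b c"
  defines "d \<equiv> pred_on_path B nxt b c"
  shows "poly (K b c k) (x b i) = - g c k * inverse (f b) * detL nb x b (lam d) / (x b i - lam d)"
proof -
  have "c \<noteq> b" using assms(2) prec_irrefl by auto
  have "x b i \<noteq> lam d"
    using x_ne_lam_edge pred_on_path_child[OF assms(2)] assms(1) unfolding d_def by blast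
  moreover have "detL nb x b (x b i) = 0"
    using assms(1) unfolding detL_def by (subst prod_zero_iff) auto
  ultimately show ?thesis using \<open>c \<noteq> b\<close> assms(2)
    by (simp add: Kdiag_def Sdiag_def Phi_eq_synthetic_div poly_synthetic_div poly_charL d_def)
qed

lemma Kdiag_eq_0: "c \<noteq> b \<Longrightarrow> \<not> prec B nxt b c \<Longrightarrow> K b c k = 0"
  by (simp add: Kdiag_def Sdiag_def)

lemma poly_Kdiag_diag:
  assumes "b \<in> {1..B}" "i \<in> {1..nb b}"
  shows "poly (K b b k) (x b i) = (if k = i then poly (P b) (x b i) else 0)"
proof (cases "k = i")
  case True
  have "(\<Prod>j\<in>{1..nb b}-{i}. x b i - x b j) \<noteq> 0"
    using nondeg assms unfolding nondegenerate_def by (subst prod_zero_iff) auto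
  then show ?thesis
    using True fvert_nonzero by (simp add: poly_Kdiag_self gdiag_def)
next
  case False
  then have "(\<Prod>j\<in>{1..nb b}-{k}. x b i - x b j) = 0"
    using assms(2) by (subst prod_zero_iff) auto
  with False show ?thesis by (simp add: poly_Kdiag_self)
qed

lemma sum_children_coeff_Kdiag_top:
  fixes b :: nat and w :: "nat \<Rightarrow> complex"
  assumes "c \<in> {1..B}" "k \<in> {1..nb c}"
  defines "d \<equiv> pred_on_path B nxt b c"
  shows "(\<Sum>a\<in>{a\<in>{1..B}. nxt a = Some b}. coeff (K a c k) (nb a - 1) / w a)
       = (if prec B nxt b c then g c k * inverse (f d) / w d else 0)"
proof -
  have "(\<Sum>a\<in>{a\<in>{1..B}. nxt a = Some b}. coeff (K a c k) (nb a - 1) / w a)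
      = (\<Sum>a\<in>{a\<in>{1..B}. nxt a = Some b}.
           if a = c \<or> prec B nxt a c then g c k * inverse (f a) / w a else 0)"
    by (intro sum.cong refl) (subst coeff_Kdiag_top[OF _ assms(1,2)], auto)
  also have "\<dots> = (\<Sum>a\<in>{a\<in>{1..B}. nxt a = Some b \<and> (a = c \<or> prec B nxt a c)}.
           g c k * inverse (f a) / w a)"
    by (simp add: sum.inter_filter[symmetric] conj_assoc)
  also have "\<dots> = (if prec B nxt b c then g c k * inverse (f d) / w d else 0)"
    unfolding d_def by (subst children_on_path) simp
  finally show ?thesis .
qed

end

context stackel_data
begin

lemma stackel_row_coeffs:
  assumes b: "b \<in> {1..B}" and i: "i \<in> {1..nb b}" and deg: "degree (Q b) < nb b"
  shows "(\<Sum>a\<in>{1..B}. \<Sum>j\<in>{1..nb a}. S b i a j * coeff (Q a) (nb a - j))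
       = poly (Q b) (x b i) / poly (P b) (x b i)
         + (\<Sum>d\<in>{d\<in>{1..B}. nxt d = Some b}.
              coeff (Q d) (nb d - 1) / (poly (P b) (x b i) * (x b i - lam d)))"
proof -
  define R where "R a = (\<Sum>j\<in>{1..nb a}. S b i a j * coeff (Q a) (nb a - j))" for a
  define T where "T d = coeff (Q d) (nb d - 1) / (poly (P b) (x b i) * (x b i - lam d))" for d
  have "R b = (\<Sum>j\<in>{1..nb b}. x b i ^ (nb b - j) * coeff (Q b) (nb b - j)) / poly (P b) (x b i)"
    unfolding R_def sum_divide_distrib by (rule sum.cong) (auto simp: stackel_def)
  also have "\<dots> = poly (Q b) (x b i) / poly (P b) (x b i)"
    using sum_reversed_coeffs_eq_poly[OF deg] by simp
  finally have Rb: "R b = poly (Q b) (x b i) / poly (P b) (x b i)" .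
  have "R a = (if nxt a = Some b then T a else 0)" if "a \<in> {1..B} - {b}" for a
  proof -
    have "R a = (\<Sum>j\<in>{1..nb a}. if j = 1 \<and> nxt a = Some b then T a else 0)"
      unfolding R_def T_def using that by (intro sum.cong) (auto simp: stackel_def)
    then show ?thesis using nb_pos that by simp
  qed
  then have "(\<Sum>a\<in>{1..B} - {b}. R a) = (\<Sum>a\<in>{1..B} - {b}. if nxt a = Some b then T a else 0)"
    by (rule sum.cong[OF refl])
  also have "\<dots> = (\<Sum>d\<in>{d\<in>{1..B}. nxt d = Some b}. T d)"
    using edge_not_below by (subst sum.inter_filter[symmetric]) (auto intro: sum.cong)
  finally show ?thesis
    using sum.remove[of "{1..B}" b R] b Rb unfolding R_def T_def by simp
qed

lemma stackel_row_Kdiag: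
  assumes b: "b \<in> {1..B}" and i: "i \<in> {1..nb b}" and c: "c \<in> {1..B}" and k: "k \<in> {1..nb c}"
  shows "(\<Sum>a\<in>{1..B}. \<Sum>j\<in>{1..nb a}. S b i a j * coeff (K a c k) (nb a - j))
         = (if c = b \<and> k = i then 1 else 0)"
proof -
  define Pb where "Pb = poly (P b) (x b i)"
  define d where "d = pred_on_path B nxt b c"
  have Pb: "Pb \<noteq> 0" using nondeg b i unfolding nondegenerate_def Pb_def by blast
  have row: "(\<Sum>a\<in>{1..B}. \<Sum>j\<in>{1..nb a}. S b i a j * coeff (K a c k) (nb a - j))
      = poly (K b c k) (x b i) / Pb
        + (if prec B nxt b c then g c k * inverse (f d) / (Pb * (x b i - lam d)) else 0)"
    using stackel_row_coeffs[where Q = "\<lambda>a. K a c k", OF b i degree_Kdiag[OF b k]]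
      sum_children_coeff_Kdiag_top[OF c k, where b = b and w = "\<lambda>a. Pb * (x b i - lam a)"]
    unfolding Pb_def d_def by simp
  consider "c = b" | "prec B nxt b c" | "c \<noteq> b" "\<not> prec B nxt b c" by blast
  then show ?thesis
  proof cases
    case 1
    then show ?thesis using row Pb prec_irrefl by (simp add: poly_Kdiag_diag[OF b i] Pb_def)
  next
    case 2
    have d: "d \<in> {1..B}" "nxt d = Some b" using pred_on_path_child[OF 2] by (simp_all add: d_def)
    have "x b i - lam d \<noteq> 0" using x_ne_lam_edge[OF d i] by simp
    moreover have "inverse (f d) = detL nb x b (lam d) * inverse (f b)"
      using fvert_edge[OF d] by (simp add: inverse_mult_distrib)
    ultimately have "poly (K b c k) (x b i) / Pb + g c k * inverse (f d) / (Pb * (x b i - lam d)) = 0"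
      using Pb by (simp add: poly_Kdiag_below[OF i 2] d_def[symmetric] field_simps)
    moreover have "c \<noteq> b" using 2 prec_irrefl by blast
    ultimately show ?thesis using row 2 by simp
  next
    case 3
    then show ?thesis using row by (simp add: Kdiag_eq_0)
  qed
qed

end

theorem theorem1p4:
  fixes n B :: nat and nb :: "nat \<Rightarrow> nat" and nxt :: "nat \<Rightarrow> nat option"
    and lam :: "nat \<Rightarrow> complex" and P :: "nat \<Rightarrow> complex poly"
    and x p :: "nat \<Rightarrow> nat \<Rightarrow> complex"
  assumes "admissible n B nb nxt lam P"
    and "nondegenerate B nb nxt lam P x"
    and "b \<in> {1..B}" and "i \<in> {1..nb b}"
  shows "(\<Sum>a\<in>{1..B}. \<Sum>j\<in>{1..nb a}.
            stackel nb nxt lam P x b i a j * integral B nb nxt lam P x p a j) = (p b i)\<^sup>2"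
proof -
  interpret stackel_data B nxt nb lam P x
    using assms(1,2) by unfold_locales (auto simp: admissible_def)
  have "(\<Sum>a\<in>{1..B}. \<Sum>j\<in>{1..nb a}. S b i a j * integral B nb nxt lam P x p a j)
      = (\<Sum>c\<in>{1..B}. \<Sum>k\<in>{1..nb c}.
           (\<Sum>a\<in>{1..B}. \<Sum>j\<in>{1..nb a}. S b i a j * coeff (K a c k) (nb a - j)) * (p c k)\<^sup>2)"
    unfolding integral_def by (rule sum_sum_mult_sum_sum_commute)
  also have "\<dots> = (\<Sum>c\<in>{1..B}. \<Sum>k\<in>{1..nb c}. if c = b \<and> k = i then (p b i)\<^sup>2 else 0)"
    by (intro sum.cong refl) (subst stackel_row_Kdiag[OF assms(3,4)], auto)
  also have "\<dots> = (\<Sum>c\<in>{1..B}. if c = b then (p b i)\<^sup>2 else 0)"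
    using assms(4) by (intro sum.cong refl) auto
  also have "\<dots> = (p b i)\<^sup>2"
    using assms(3) by simp
  finally show ?thesis .
qed

end
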